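(* Let $x_0 \in \mathcal{X}_n \subset \mathbb{R}^2$ and assume $\phi\in C^\infty(\mathbb{R}^2)$ is quasiconcave with $|\nabla\phi(x_0)|>0$. Suppose $V_h(x_0)$ satisfies: (i) if $p\in V_h(x_0)$ then $-p\in V_h(x_0)$; and (ii) if $p\in V_h(x_0)$ then there exists $q\in V_h(x_0)$ with $p\cdot q = 0$. Then $P_h^-[\phi](x_0)$ is nonempty.
   Context: $\mathcal{X}_n=\{x_1,\dots,x_n\}\subset\mathbb{R}^2$ is a finite point cloud; each $x\in\mathcal{X}_n$ has a neighbor set $N_h(x)\subset\mathcal{X}_n\setminus\{x\}$, and $V_h(x):=\{y-x : y\in N_h(x)\}$. For a function $u$ defined on $\mathcal{X}_n$ (or on a superset) and $x\in\mathcal{X}_n$, \[ P_h^-[u](x) := \{p\in\mathbb{R}^2 : -p\in V_h(x), \text{ and for all } y\in N_h(x),\ p\cdot(y-x)<0 \implies u(y)\le u(x)\}. \] A function $\phi$ is quasiconcave if $\phi(\lambda x + (1-\lambda)y)\ge\min(\phi(x),\phi(y))$ for all $x,y$ and $0<\lambda<1$. *)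

theory Defs
  imports "HOL-Analysis.Analysis"
begin

definition quasiconcave :: "('a::real_vector \<Rightarrow> real) \<Rightarrow> bool" where
  "quasiconcave \<phi> \<longleftrightarrow>
     (\<forall>x y t. 0 < t \<and> t < 1 \<longrightarrow> \<phi> (t *\<^sub>R x + (1 - t) *\<^sub>R y) \<ge> min (\<phi> x) (\<phi> y))"

fun C_k :: "nat \<Rightarrow> ('a::real_normed_vector \<Rightarrow> real) \<Rightarrow> bool" where
  "C_k 0 f \<longleftrightarrow> continuous_on UNIV f"
| "C_k (Suc k) f \<longleftrightarrow> (\<exists>f'. (\<forall>x. (f has_derivative f' x) (at x)) \<and> (\<forall>v. C_k k (\<lambda>x. f' x v)))"

definition smooth :: "('a::real_normed_vector \<Rightarrow> real) \<Rightarrow> bool" where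
  "smooth f \<longleftrightarrow> (\<forall>k. C_k k f)"

definition Vh :: "('a::ab_group_add \<Rightarrow> 'a set) \<Rightarrow> 'a \<Rightarrow> 'a set" where
  "Vh N x = (\<lambda>y. y - x) ` N x"

definition P_minus :: "(real^2 \<Rightarrow> (real^2) set) \<Rightarrow> (real^2 \<Rightarrow> real) \<Rightarrow> real^2 \<Rightarrow> (real^2) set" where
  "P_minus N u x = {p. - p \<in> Vh N x \<and> (\<forall>y\<in>N x. p \<bullet> (y - x) < 0 \<longrightarrow> u y \<le> u x)}"

end

theory Submission
  imports Defs
begin

text \<open>
  By quasiconcavity, the points of \<open>N\<^sub>h(x\<^sub>0)\<close> where \<open>\<phi>\<close> exceeds \<open>\<phi>(x\<^sub>0)\<close> all lie in the
  open half-plane \<open>{v. \<nabla>\<phi>(x\<^sub>0) \<bullet> v > 0}\<close> (translated to \<open>x\<^sub>0\<close>). Among the difference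
  vectors in this half-plane take an angularly extremal one, \<open>u\<close>; then all of them lie
  on one side of the line \<open>\<real> u\<close>. By (ii) that line has a normal \<open>q \<in> V\<^sub>h(x\<^sub>0)\<close>, and by (i)
  the one of \<open>\<plusminus>q\<close> pointing to that side lies in \<open>P\<^sub>h\<^sup>-[\<phi>](x\<^sub>0)\<close>.
\<close>

lemma quasiconcave_derivative_nonneg:
  fixes \<phi> :: "'a::real_inner \<Rightarrow> real"
  assumes qc: "quasiconcave \<phi>"
    and deriv: "(\<phi> has_derivative (\<lambda>v. g \<bullet> v)) (at x0)"
    and ge: "\<phi> z \<ge> \<phi> x0"
  shows "g \<bullet> (z - x0) \<ge> 0"
proof (rule ccontr)
  assume neg: "\<not> g \<bullet> (z - x0) \<ge> 0"
  let ?d = "z - x0"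
  have "((\<lambda>t. \<phi> (x0 + t *\<^sub>R ?d)) has_real_derivative (g \<bullet> ?d)) (at 0)"
  proof -
    have line: "((\<lambda>t::real. x0 + t *\<^sub>R ?d) has_derivative (\<lambda>t. t *\<^sub>R ?d)) (at 0)"
      by (auto intro!: derivative_eq_intros)
    have "(\<phi> has_derivative (\<lambda>v. g \<bullet> v)) (at (x0 + 0 *\<^sub>R ?d))"
      using deriv by simp
    from diff_chain_at[OF line this] show ?thesis
      by (simp add: o_def has_field_derivative_def mult.commute[of _ "g \<bullet> ?d"])
  qed
  then obtain e where "e > 0" and dec: "\<forall>h>0. h < e \<longrightarrow> \<phi> (x0 + h *\<^sub>R ?d) < \<phi> x0"
    using DERIV_neg_dec_right[of "\<lambda>t. \<phi> (x0 + t *\<^sub>R ?d)" "g \<bullet> ?d" 0] neg by force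
  define t where "t = min (e/2) (1/2)"
  have t: "0 < t" "t < 1" "t < e"
    using \<open>e > 0\<close> by (auto simp: t_def)
  have "x0 + t *\<^sub>R ?d = t *\<^sub>R z + (1 - t) *\<^sub>R x0"
    by (simp add: algebra_simps)
  moreover have "\<phi> (t *\<^sub>R z + (1 - t) *\<^sub>R x0) \<ge> min (\<phi> z) (\<phi> x0)"
    using qc t unfolding quasiconcave_def by blast
  ultimately show False
    using dec t ge by fastforce
qed

lemma quasiconcave_derivative_pos:
  fixes \<phi> :: "'a::real_inner \<Rightarrow> real"
  assumes qc: "quasiconcave \<phi>"
    and deriv: "(\<phi> has_derivative (\<lambda>v. g \<bullet> v)) (at x0)"
    and cont: "isCont \<phi> y"
    and "g \<noteq> 0"
    and gt: "\<phi> y > \<phi> x0"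
  shows "g \<bullet> (y - x0) > 0"
proof -
  have "isCont (\<lambda>e::real. y - e *\<^sub>R g) 0"
    by simp
  with cont have "isCont (\<lambda>e. \<phi> (y - e *\<^sub>R g)) 0"
    using isCont_o2 by fastforce
  then obtain r where "r > 0" and r: "\<forall>e. dist e 0 < r \<longrightarrow> \<bar>\<phi> (y - e *\<^sub>R g) - \<phi> y\<bar> < \<phi> y - \<phi> x0"
    using gt unfolding continuous_at_eps_delta by (metis diff_gt_0_iff_gt dist_real_def scale_zero_left diff_zero)
  \<comment> \<open>step back from \<open>y\<close> against \<open>g\<close> without leaving the strict upper level set;
     the non-strict bound there becomes strict at \<open>y\<close>\<close>
  define e where "e = r / 2"
  have "e > 0" "dist e 0 < r"
    using \<open>r > 0\<close> by (auto simp: e_def)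
  then have "\<phi> (y - e *\<^sub>R g) > \<phi> x0"
    using r by fastforce
  then have "g \<bullet> (y - e *\<^sub>R g - x0) \<ge> 0"
    using quasiconcave_derivative_nonneg[OF qc deriv] by simp
  then have "g \<bullet> (y - x0) \<ge> e * (g \<bullet> g)"
    by (simp add: algebra_simps)
  moreover have "e * (g \<bullet> g) > 0"
    using \<open>e > 0\<close> \<open>g \<noteq> 0\<close> by simp
  ultimately show ?thesis by linarith
qed

definition perp :: "real^2 \<Rightarrow> real^2" where
  "perp v = vector [- v$2, v$1]"

lemma inner_real2: "(a::real^2) \<bullet> b = a$1 * b$1 + a$2 * b$2"
  by (simp add: inner_vec_def sum_2)

lemma perp_nth [simp]: "perp v $ 1 = - v$2" "perp v $ 2 = v$1"
  by (simp_all add: perp_def)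

lemma orthogonal_real2_eq_scaleR_perp:
  fixes u q :: "real^2"
  assumes "u \<noteq> 0" and "q \<bullet> u = 0"
  shows "q = ((q \<bullet> perp u) / (u \<bullet> u)) *\<^sub>R perp u"
proof -
  have "(u \<bullet> u) *\<^sub>R q = (q \<bullet> u) *\<^sub>R u + (q \<bullet> perp u) *\<^sub>R perp u"
    by (simp add: vec_eq_iff forall_2 inner_real2 algebra_simps)
  then have "(u \<bullet> u) *\<^sub>R q = (q \<bullet> perp u) *\<^sub>R perp u"
    using assms(2) by simp
  moreover have "u \<bullet> u \<noteq> 0"
    using assms(1) by simp
  ultimately show ?thesis
    by (simp add: scaleR_left_imp_eq[of "u \<bullet> u"])
qed

text \<open>
  On the open half-plane \<open>{v. g \<bullet> v > 0}\<close> the slope \<open>(perp g \<bullet> v) / (g \<bullet> v)\<close> is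
  monotone in the angle of \<open>v\<close>, so a minimiser is angularly extremal.
\<close>

lemma slope_le_imp_perp_inner_nonneg:
  fixes g u v :: "real^2"
  assumes "g \<bullet> u > 0" and "g \<bullet> v > 0"
    and "(perp g \<bullet> u) / (g \<bullet> u) \<le> (perp g \<bullet> v) / (g \<bullet> v)"
  shows "perp u \<bullet> v \<ge> 0"
proof -
  have "(perp g \<bullet> u) * (g \<bullet> v) \<le> (perp g \<bullet> v) * (g \<bullet> u)"
    using assms by (simp add: divide_simps mult.commute)
  moreover have "(g \<bullet> g) * (perp u \<bullet> v) = (perp g \<bullet> v) * (g \<bullet> u) - (perp g \<bullet> u) * (g \<bullet> v)"
    by (simp add: inner_real2 algebra_simps)
  ultimately have "(g \<bullet> g) * (perp u \<bullet> v) \<ge> 0"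
    by linarith
  moreover have "g \<bullet> g > 0"
    using assms(1) by (metis inner_zero_left inner_gt_zero_iff less_irrefl)
  ultimately show ?thesis
    by (simp add: zero_le_mult_iff)
qed

lemma finite_halfplane_extremal:
  fixes S :: "(real^2) set"
  assumes "finite S" "S \<noteq> {}" and pos: "\<forall>v\<in>S. g \<bullet> v > 0"
  obtains u where "u \<in> S" "\<forall>v\<in>S. perp u \<bullet> v \<ge> 0"
proof -
  obtain u where "is_arg_min (\<lambda>v. (perp g \<bullet> v) / (g \<bullet> v)) (\<lambda>v. v \<in> S) u"
    using ex_is_arg_min_if_finite[OF assms(1,2)] by auto
  then have "u \<in> S" and min: "\<forall>v\<in>S. (perp g \<bullet> u) / (g \<bullet> u) \<le> (perp g \<bullet> v) / (g \<bullet> v)"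
    by (auto simp: is_arg_min_linorder)
  have "perp u \<bullet> v \<ge> 0" if "v \<in> S" for v
    using pos min \<open>u \<in> S\<close> that by (intro slope_le_imp_perp_inner_nonneg) auto
  with \<open>u \<in> S\<close> show ?thesis
    using that by blast
qed

lemma exists_direction_nonneg_on_halfplane:
  fixes V :: "(real^2) set" and g :: "real^2"
  assumes "finite V" "V \<noteq> {}"
    and orth: "\<forall>p\<in>V. \<exists>q\<in>V. p \<bullet> q = 0"
    and sym: "\<forall>p\<in>V. - p \<in> V"
  obtains p where "p \<in> V" "\<forall>v\<in>V. g \<bullet> v > 0 \<longrightarrow> p \<bullet> v \<ge> 0"
proof (cases "\<exists>v\<in>V. g \<bullet> v > 0")
  case False
  then show ?thesis
    using that \<open>V \<noteq> {}\<close> by auto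
next
  case True
  define S where "S = {v\<in>V. g \<bullet> v > 0}"
  have "finite S" "S \<noteq> {}" "\<forall>v\<in>S. g \<bullet> v > 0"
    using True \<open>finite V\<close> by (auto simp: S_def)
  then obtain u where "u \<in> S" and side: "\<forall>v\<in>S. perp u \<bullet> v \<ge> 0"
    by (rule finite_halfplane_extremal)
  then have "u \<in> V" "u \<noteq> 0"
    by (auto simp: S_def)
  then obtain q where "q \<in> V" "q \<bullet> u = 0"
    using orth inner_commute by metis
  define c where "c = (q \<bullet> perp u) / (u \<bullet> u)"
  have q: "q = c *\<^sub>R perp u"
    unfolding c_def using orthogonal_real2_eq_scaleR_perp \<open>u \<noteq> 0\<close> \<open>q \<bullet> u = 0\<close> by blast
  define p where "p = (if c \<ge> 0 then q else - q)"
  have "p \<in> V"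
    using \<open>q \<in> V\<close> sym by (simp add: p_def)
  moreover have "p = \<bar>c\<bar> *\<^sub>R perp u"
    using q by (simp add: p_def)
  then have "p \<bullet> v \<ge> 0" if "v \<in> S" for v
    using side that by simp
  ultimately show ?thesis
    using that by (auto simp: S_def)
qed

theorem theorem2:
  fixes X :: "(real^2) set" and N :: "real^2 \<Rightarrow> (real^2) set"
    and \<phi> :: "real^2 \<Rightarrow> real" and x0 g :: "real^2"
  assumes "finite X"
    and "\<forall>x\<in>X. N x \<subseteq> X - {x}"
    and "x0 \<in> X"
    and "N x0 \<noteq> {}"
    and "smooth \<phi>"
    and "quasiconcave \<phi>"
    and "(\<phi> has_derivative (\<lambda>v. g \<bullet> v)) (at x0)"
    and "norm g > 0"
    and "\<forall>p\<in>Vh N x0. - p \<in> Vh N x0"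
    and "\<forall>p\<in>Vh N x0. \<exists>q\<in>Vh N x0. p \<bullet> q = 0"
  shows "P_minus N \<phi> x0 \<noteq> {}"
proof -
  have "N x0 \<subseteq> X - {x0}"
    using assms(2,3) by blast
  then have "finite (Vh N x0)" "Vh N x0 \<noteq> {}"
    using assms(1,4) finite_subset by (auto simp: Vh_def)
  then obtain p where "p \<in> Vh N x0" and p_nonneg: "\<forall>v\<in>Vh N x0. g \<bullet> v > 0 \<longrightarrow> p \<bullet> v \<ge> 0"
    using exists_direction_nonneg_on_halfplane assms(9,10) by metis
  have "continuous_on UNIV \<phi>"
    using \<open>smooth \<phi>\<close> C_k.simps(1) unfolding smooth_def by blast
  then have upper: "g \<bullet> (y - x0) > 0" if "\<phi> y > \<phi> x0" for y
    using quasiconcave_derivative_pos[OF assms(6,7) _ _ that] assms(8)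
    by (simp add: continuous_on_eq_continuous_at)
  have "\<phi> y \<le> \<phi> x0" if "y \<in> N x0" "p \<bullet> (y - x0) < 0" for y
  proof (rule ccontr)
    assume "\<not> \<phi> y \<le> \<phi> x0"
    moreover have "y - x0 \<in> Vh N x0"
      using that(1) by (simp add: Vh_def)
    ultimately show False
      using p_nonneg upper that(2) by fastforce
  qed
  moreover have "- p \<in> Vh N x0"
    using \<open>p \<in> Vh N x0\<close> assms(9) by blast
  ultimately have "p \<in> P_minus N \<phi> x0"
    by (simp add: P_minus_def)
  then show ?thesis by blast
qed

end
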